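(* Let $H$ be a graph with at least one edge, and suppose $H\cong H_1\times H_2$ where neither $H_1$ nor $H_2$ is isomorphic to $K_1^*$. Then $H$ is not projective.
   Context: Graphs are finite, undirected, without parallel edges, loops allowed; $K_1^*$ is the one-vertex graph with a loop. A homomorphism is an edge-preserving vertex map. The direct product $H_1\times H_2$ has vertex set $V(H_1)\times V(H_2)$ with $(x_1,y_1)(x_2,y_2)$ an edge iff $x_1x_2\in E(H_1)$ and $y_1y_2\in E(H_2)$; $H^m$ is the $m$-fold product and $\pi_i(x_1,\dots,x_m)=x_i$. A homomorphism $f\colon H^m\to H$ is idempotent if $f(x,\dots,x)=x$ for all $x$. $H$ is projective if for every $m\ge2$ every idempotent homomorphism $H^m\to H$ equals some $\pi_i$. *)

theory Defs
  imports Main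
begin

record 'a graph =
  verts :: "'a set"
  adj :: "'a \<Rightarrow> 'a \<Rightarrow> bool"

definition is_graph :: "('a, 'm) graph_scheme \<Rightarrow> bool" where
  "is_graph G \<longleftrightarrow> finite (verts G)
     \<and> (\<forall>x y. adj G x y \<longrightarrow> x \<in> verts G \<and> y \<in> verts G)
     \<and> (\<forall>x y. adj G x y \<longrightarrow> adj G y x)"

definition has_edge :: "'a graph \<Rightarrow> bool" where
  "has_edge G \<longleftrightarrow> (\<exists>x y. adj G x y)"

definition graph_hom :: "'a graph \<Rightarrow> 'b graph \<Rightarrow> ('a \<Rightarrow> 'b) \<Rightarrow> bool" where
  "graph_hom G H f \<longleftrightarrow> (\<forall>x\<in>verts G. f x \<in> verts H)
     \<and> (\<forall>x y. adj G x y \<longrightarrow> adj H (f x) (f y))"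

definition graph_iso :: "'a graph \<Rightarrow> 'b graph \<Rightarrow> ('a \<Rightarrow> 'b) \<Rightarrow> bool" where
  "graph_iso G H f \<longleftrightarrow> bij_betw f (verts G) (verts H)
     \<and> (\<forall>x\<in>verts G. \<forall>y\<in>verts G. adj G x y \<longleftrightarrow> adj H (f x) (f y))"

definition isomorphic :: "'a graph \<Rightarrow> 'b graph \<Rightarrow> bool" where
  "isomorphic G H \<longleftrightarrow> (\<exists>f. graph_iso G H f)"

definition dprod :: "'a graph \<Rightarrow> 'b graph \<Rightarrow> ('a \<times> 'b) graph" where
  "dprod G H = \<lparr>verts = verts G \<times> verts H,
     adj = (\<lambda>(x1, y1) (x2, y2). adj G x1 x2 \<and> adj H y1 y2)\<rparr>"

text \<open>m-fold direct power; vertices are lists of length m (index i = coordinate i+1).\<close>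
definition gpow :: "'a graph \<Rightarrow> nat \<Rightarrow> 'a list graph" where
  "gpow G m = \<lparr>verts = {xs. length xs = m \<and> set xs \<subseteq> verts G},
     adj = (\<lambda>xs ys. length xs = m \<and> length ys = m \<and> (\<forall>i<m. adj G (xs ! i) (ys ! i)))\<rparr>"

definition K1_star :: "unit graph" where
  "K1_star = \<lparr>verts = UNIV, adj = (\<lambda>_ _. True)\<rparr>"

definition idempotent_op :: "'a graph \<Rightarrow> nat \<Rightarrow> ('a list \<Rightarrow> 'a) \<Rightarrow> bool" where
  "idempotent_op H m f \<longleftrightarrow> (\<forall>x\<in>verts H. f (replicate m x) = x)"

definition projective :: "'a graph \<Rightarrow> bool" where
  "projective H \<longleftrightarrow> (\<forall>m\<ge>2. \<forall>f. graph_hom (gpow H m) H f \<and> idempotent_op H m f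
      \<longrightarrow> (\<exists>i<m. \<forall>xs\<in>verts (gpow H m). f xs = xs ! i))"

end

theory Submission
  imports Defs
begin

text \<open>For graphs \<open>G\<close> and \<open>H\<close> with at least two vertices each, the binary operation
  \<open>((a, b), (c, d)) \<mapsto> (a, d)\<close> on \<open>G \<times> H\<close> is an idempotent homomorphism that depends on both
  arguments, so \<open>G \<times> H\<close> is not projective; projectivity is invariant under isomorphism.
  A factor of a graph with an edge has an edge itself, and a graph with an edge that is not
  \<open>K\<^sub>1\<^sup>*\<close> has two distinct vertices.\<close>

lemma is_graph_dprod:
  assumes "is_graph G" and "is_graph H"
  shows "is_graph (dprod G H)"
  using assms unfolding is_graph_def dprod_def by auto

lemma verts_dprod [simp]: "verts (dprod G H) = verts G \<times> verts H"
  unfolding dprod_def by simp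

lemma adj_dprod [simp]:
  "adj (dprod G H) p q \<longleftrightarrow> adj G (fst p) (fst q) \<and> adj H (snd p) (snd q)"
  unfolding dprod_def by (simp add: case_prod_beta)

lemma nth_in_verts_gpow:
  assumes "xs \<in> verts (gpow G m)" and "i < m"
  shows "xs ! i \<in> verts G"
  using assms unfolding gpow_def by auto

lemma graph_hom_comp:
  assumes "graph_hom G H f" and "graph_hom H K g"
  shows "graph_hom G K (g \<circ> f)"
  using assms unfolding graph_hom_def by simp

lemma graph_hom_if_graph_iso:
  assumes "is_graph G" and "graph_iso G H \<phi>"
  shows "graph_hom G H \<phi>"
  using assms unfolding is_graph_def graph_iso_def graph_hom_def bij_betw_def by blast

lemma graph_iso_inv_into:
  assumes "graph_iso G H \<phi>"
  shows "graph_iso H G (inv_into (verts G) \<phi>)"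
proof -
  have bij: "bij_betw \<phi> (verts G) (verts H)"
    using assms unfolding graph_iso_def by blast
  have "adj H p q \<longleftrightarrow> adj G (inv_into (verts G) \<phi> p) (inv_into (verts G) \<phi> q)"
    if "p \<in> verts H" "q \<in> verts H" for p q
    using assms that bij_betw_inv_into_right[OF bij] bij_betwE[OF bij_betw_inv_into[OF bij]]
    unfolding graph_iso_def by metis
  with bij_betw_inv_into[OF bij] show ?thesis
    unfolding graph_iso_def by blast
qed

lemma graph_hom_gpow_map:
  assumes "is_graph G" and "graph_hom G H \<phi>"
  shows "graph_hom (gpow G m) (gpow H m) (map \<phi>)"
  using assms unfolding graph_hom_def gpow_def by auto

lemma projective_graph_iso:
  assumes G: "is_graph G" and H: "is_graph H"
    and iso: "graph_iso G H \<phi>" and proj: "projective G"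
  shows "projective H"
  unfolding projective_def
proof (intro allI impI)
  fix m f
  assume m: "2 \<le> m" and f: "graph_hom (gpow H m) H f \<and> idempotent_op H m f"
  define \<psi> where "\<psi> = inv_into (verts G) \<phi>"
  have bij: "bij_betw \<phi> (verts G) (verts H)"
    using iso unfolding graph_iso_def by blast
  have \<phi>\<psi>: "\<phi> (\<psi> y) = y" if "y \<in> verts H" for y
    using bij_betw_inv_into_right[OF bij that] unfolding \<psi>_def .
  have \<psi>\<phi>: "\<psi> (\<phi> x) = x" if "x \<in> verts G" for x
    using bij_betw_inv_into_left[OF bij that] unfolding \<psi>_def .
  have "graph_hom (gpow G m) G (\<psi> \<circ> f \<circ> map \<phi>)"
    using graph_hom_gpow_map[OF G graph_hom_if_graph_iso[OF G iso]] f
      graph_hom_if_graph_iso[OF H graph_iso_inv_into[OF iso]]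
    unfolding \<psi>_def by (metis graph_hom_comp)
  moreover have "idempotent_op G m (\<psi> \<circ> f \<circ> map \<phi>)"
    using f \<psi>\<phi> bij_betwE[OF bij] unfolding idempotent_op_def by simp
  ultimately obtain i where "i < m"
    and i: "\<And>xs. xs \<in> verts (gpow G m) \<Longrightarrow> \<psi> (f (map \<phi> xs)) = xs ! i"
    using proj m unfolding projective_def by fastforce
  have "f ys = ys ! i" if ys: "ys \<in> verts (gpow H m)" for ys
  proof -
    have \<psi>ys: "map \<psi> ys \<in> verts (gpow G m)"
      using ys bij_betwE[OF bij_betw_inv_into[OF bij]] unfolding \<psi>_def gpow_def by auto
    have "map \<phi> (map \<psi> ys) = ys"
      using ys \<phi>\<psi> unfolding gpow_def by (auto intro!: map_idI)
    then have "\<psi> (f ys) = \<psi> (ys ! i)"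
      using i[OF \<psi>ys] \<open>i < m\<close> ys unfolding gpow_def by simp
    moreover have "f ys \<in> verts H" "ys ! i \<in> verts H"
      using f ys \<open>i < m\<close> unfolding graph_hom_def gpow_def by auto
    ultimately show ?thesis
      using \<phi>\<psi> by metis
  qed
  with \<open>i < m\<close> show "\<exists>i<m. \<forall>ys\<in>verts (gpow H m). f ys = ys ! i"
    by blast
qed

lemma dprod_not_projective:
  assumes "u \<in> verts G" "u' \<in> verts G" "u \<noteq> u'"
    and "v \<in> verts H" "v' \<in> verts H" "v \<noteq> v'"
  shows "\<not> projective (dprod G H)"
proof
  assume proj: "projective (dprod G H)"
  define f where "f = (\<lambda>xs :: ('a \<times> 'b) list. (fst (xs ! 0), snd (xs ! 1)))"
  have "f xs \<in> verts (dprod G H)" if "xs \<in> verts (gpow (dprod G H) 2)" for xs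
    using nth_in_verts_gpow[OF that, of 0] nth_in_verts_gpow[OF that, of 1]
    unfolding f_def by auto
  then have "graph_hom (gpow (dprod G H) 2) (dprod G H) f"
    unfolding graph_hom_def by (simp add: f_def gpow_def)
  moreover have "idempotent_op (dprod G H) 2 f"
    unfolding idempotent_op_def f_def by (simp add: numeral_2_eq_2)
  ultimately obtain i where "i < 2"
    and i: "\<And>xs. xs \<in> verts (gpow (dprod G H) 2) \<Longrightarrow> f xs = xs ! i"
    using proj unfolding projective_def by fastforce
  have "[(u, v), (u', v')] \<in> verts (gpow (dprod G H) 2)"
    using assms unfolding gpow_def by auto
  from i[OF this] \<open>i < 2\<close> assms show False
    unfolding f_def by (auto simp: less_2_cases_iff)
qed

lemma two_vertices_if_not_K1_star:
  assumes G: "is_graph G" and "adj G a b" and "\<not> isomorphic G K1_star"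
  shows "\<exists>u\<in>verts G. \<exists>u'\<in>verts G. u \<noteq> u'"
proof (rule ccontr)
  assume "\<not> ?thesis"
  moreover have "a \<in> verts G" "b \<in> verts G"
    using G \<open>adj G a b\<close> unfolding is_graph_def by auto
  ultimately have "verts G = {a}" and "b = a"
    by blast+
  with \<open>adj G a b\<close> have "verts G = {a}" and "adj G a a"
    by simp_all
  then have "graph_iso G K1_star (\<lambda>_. ())"
    unfolding graph_iso_def K1_star_def by (auto simp: bij_betw_def)
  with \<open>\<not> isomorphic G K1_star\<close> show False
    unfolding isomorphic_def by blast
qed

theorem mainTheorem9:
  fixes H :: "'a graph" and H1 :: "'b graph" and H2 :: "'c graph"
  assumes "is_graph H" and "is_graph H1" and "is_graph H2"
    and "has_edge H"
    and "isomorphic H (dprod H1 H2)"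
    and "\<not> isomorphic H1 K1_star" and "\<not> isomorphic H2 K1_star"
  shows "\<not> projective H"
proof
  assume "projective H"
  obtain \<phi> where iso: "graph_iso H (dprod H1 H2) \<phi>"
    using assms(5) unfolding isomorphic_def by blast
  then have proj: "projective (dprod H1 H2)"
    using projective_graph_iso is_graph_dprod assms(1-3) \<open>projective H\<close> by blast
  obtain x y where "adj H x y"
    using assms(4) unfolding has_edge_def by blast
  then have "adj (dprod H1 H2) (\<phi> x) (\<phi> y)"
    using graph_hom_if_graph_iso[OF assms(1) iso] unfolding graph_hom_def by blast
  then obtain a b c d where "adj H1 a b" "adj H2 c d"
    by auto
  then show False
    using two_vertices_if_not_K1_star assms(2,3,6,7) dprod_not_projective proj by metis
qed

end
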